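(* If two weighted hybrid graphs (with positive edge weights) have identical vertex sets and identical $L$-edge and $Q$-edge sets, then their hybrid Laplacians have identical kernels.
   Context: A weighted hybrid graph $G=(V,E_L+E_Q)$ has a set $E_L$ of $L$-edges and a set $E_Q$ of $Q$-edges, each edge with a positive weight. Its hybrid Laplacian is $\mathcal{L}(G)=L(S_l)+Q(S_q)$ with $S_l=(V,E_L)$, $S_q=(V,E_Q)$, where for a weighted graph $L=D-A$ and $Q=D+A$ with $A$ the weighted adjacency matrix and $D$ the diagonal matrix of weighted degrees. The edge weights of the two graphs may differ. *)

theory Defs
  imports "HOL-Analysis.Analysis"
begin

text \<open>An (undirected, simple) edge is a
 two-element set of vertices; a weighted edge set is a set E of such edges together with a
 weight function w, positive on E.\<close>

definition wadj :: "'n::finite set set \<Rightarrow> ('n set \<Rightarrow> real) \<Rightarrow> real^'n^'n" where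
  "wadj E w = (\<chi> i j. if {i, j} \<in> E then w {i, j} else 0)"

definition wdeg :: "'n::finite set set \<Rightarrow> ('n set \<Rightarrow> real) \<Rightarrow> real^'n^'n" where
  "wdeg E w = (\<chi> i j. if i = j then (\<Sum>k\<in>UNIV. wadj E w $ i $ k) else 0)"

definition laplacian :: "'n::finite set set \<Rightarrow> ('n set \<Rightarrow> real) \<Rightarrow> real^'n^'n" where
  "laplacian E w = wdeg E w - wadj E w"

definition signless_laplacian :: "'n::finite set set \<Rightarrow> ('n set \<Rightarrow> real) \<Rightarrow> real^'n^'n" where
  "signless_laplacian E w = wdeg E w + wadj E w"

definition weighted_hybrid_graph ::
  "'n::finite set set \<Rightarrow> 'n set set \<Rightarrow> ('n set \<Rightarrow> real) \<Rightarrow> ('n set \<Rightarrow> real) \<Rightarrow> bool" where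
  "weighted_hybrid_graph E_L E_Q wl wq \<longleftrightarrow>
     (\<forall>e \<in> E_L \<union> E_Q. card e = 2) \<and> E_L \<inter> E_Q = {} \<and>
     (\<forall>e \<in> E_L. wl e > 0) \<and> (\<forall>e \<in> E_Q. wq e > 0)"

definition hybrid_laplacian ::
  "'n::finite set set \<Rightarrow> 'n set set \<Rightarrow> ('n set \<Rightarrow> real) \<Rightarrow> ('n set \<Rightarrow> real) \<Rightarrow> real^'n^'n" where
  "hybrid_laplacian E_L E_Q wl wq = laplacian E_L wl + signless_laplacian E_Q wq"

definition mat_kernel :: "real^'n^'m \<Rightarrow> (real^'n) set" where
  "mat_kernel M = {x. M *v x = 0}"

end

theory Submission
  imports Defs
begin

text \<open>Writing \<open>a\<close> for the weighted adjacency of the L-edges and \<open>b\<close> for that of the Q-edges,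
  \<open>2 x \<bullet> \<L> x = \<Sum>\<^sub>i\<^sub>k a\<^sub>i\<^sub>k (x\<^sub>i - x\<^sub>k)\<^sup>2 + b\<^sub>i\<^sub>k (x\<^sub>i + x\<^sub>k)\<^sup>2\<close>.
  All terms are nonnegative, so \<open>\<L> x = 0\<close> forces \<open>x\<^sub>i = x\<^sub>k\<close> along every L-edge and
  \<open>x\<^sub>i = -x\<^sub>k\<close> along every Q-edge; conversely these conditions kill every row of \<open>\<L> x\<close>.
  The kernel is therefore described by the edge sets alone, whatever the positive weights.\<close>

lemma wadj_commute: "wadj E w $ i $ k = wadj E w $ k $ i"
  unfolding wadj_def by (simp add: insert_commute)

lemma wadj_nonneg: "\<forall>e\<in>E. w e > 0 \<Longrightarrow> wadj E w $ i $ k \<ge> 0"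
  unfolding wadj_def by (auto intro: less_imp_le)

lemma wadj_pos: "\<forall>e\<in>E. w e > 0 \<Longrightarrow> {i, k} \<in> E \<Longrightarrow> wadj E w $ i $ k > 0"
  unfolding wadj_def by auto

lemma wdeg_mult_vec_nth: "(wdeg E w *v x) $ i = (\<Sum>k\<in>UNIV. wadj E w $ i $ k) * x $ i"
proof -
  have "(wdeg E w *v x) $ i
      = (\<Sum>j\<in>UNIV. (if i = j then (\<Sum>k\<in>UNIV. wadj E w $ i $ k) else 0) * x $ j)"
    unfolding wdeg_def matrix_vector_mult_def by simp
  also have "\<dots> = (\<Sum>j\<in>UNIV. if i = j then (\<Sum>k\<in>UNIV. wadj E w $ i $ k) * x $ j else 0)"
    by (rule sum.cong) auto
  finally show ?thesis by simp
qed

lemma wadj_mult_vec_nth: "(wadj E w *v x) $ i = (\<Sum>k\<in>UNIV. wadj E w $ i $ k * x $ k)"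
  unfolding matrix_vector_mult_def by simp

lemma hybrid_laplacian_mult_vec_nth:
  "(hybrid_laplacian El Eq wl wq *v x) $ i =
     (\<Sum>k\<in>UNIV. wadj El wl $ i $ k * (x $ i - x $ k) + wadj Eq wq $ i $ k * (x $ i + x $ k))"
  unfolding hybrid_laplacian_def laplacian_def signless_laplacian_def
  by (simp add: matrix_vector_mult_add_rdistrib matrix_vector_mult_diff_rdistrib
      wdeg_mult_vec_nth wadj_mult_vec_nth sum_distrib_left sum.distrib sum_subtractf
      algebra_simps)

text \<open>Symmetrising over \<open>(i, k) \<leftrightarrow> (k, i)\<close> completes the square; \<open>c = -1\<close> gives the
  Laplacian and \<open>c = 1\<close> the signless Laplacian.\<close>

lemma sum_symmetric_complete_square:
  fixes a :: "'a \<Rightarrow> 'a \<Rightarrow> real" and c :: real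
  assumes sym: "\<And>i k. a i k = a k i" and "c\<^sup>2 = 1"
  shows "2 * (\<Sum>i\<in>S. \<Sum>k\<in>S. a i k * x i * (x i + c * x k))
       = (\<Sum>i\<in>S. \<Sum>k\<in>S. a i k * (x i + c * x k)\<^sup>2)"
proof -
  let ?f = "\<lambda>i k. a i k * x i * (x i + c * x k)"
  have swap: "(\<Sum>i\<in>S. \<Sum>k\<in>S. ?f i k) = (\<Sum>i\<in>S. \<Sum>k\<in>S. ?f k i)"
    by (rule sum.swap)
  have "\<And>i k. ?f i k + ?f k i = a i k * (x i + c * x k)\<^sup>2"
    using sym \<open>c\<^sup>2 = 1\<close> by (simp add: power2_eq_square algebra_simps)
  then have "(\<Sum>i\<in>S. \<Sum>k\<in>S. ?f i k) + (\<Sum>i\<in>S. \<Sum>k\<in>S. ?f k i)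
      = (\<Sum>i\<in>S. \<Sum>k\<in>S. a i k * (x i + c * x k)\<^sup>2)"
    by (simp add: sum.distrib[symmetric])
  with swap show ?thesis by simp
qed

lemma hybrid_laplacian_quadratic_form:
  fixes x :: "real^'n::finite"
  shows "2 * (x \<bullet> (hybrid_laplacian El Eq wl wq *v x)) =
     (\<Sum>i\<in>UNIV. \<Sum>k\<in>UNIV. wadj El wl $ i $ k * (x $ i - x $ k)\<^sup>2)
   + (\<Sum>i\<in>UNIV. \<Sum>k\<in>UNIV. wadj Eq wq $ i $ k * (x $ i + x $ k)\<^sup>2)"
proof -
  have "x \<bullet> (hybrid_laplacian El Eq wl wq *v x)
      = (\<Sum>i\<in>UNIV. \<Sum>k\<in>UNIV. wadj El wl $ i $ k * x $ i * (x $ i + - 1 * x $ k)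
                                + wadj Eq wq $ i $ k * x $ i * (x $ i + 1 * x $ k))"
    by (simp add: inner_vec_def hybrid_laplacian_mult_vec_nth sum_distrib_left algebra_simps)
  also have "\<dots> = (\<Sum>i\<in>UNIV. \<Sum>k\<in>UNIV. wadj El wl $ i $ k * x $ i * (x $ i + - 1 * x $ k))
      + (\<Sum>i\<in>UNIV. \<Sum>k\<in>UNIV. wadj Eq wq $ i $ k * x $ i * (x $ i + 1 * x $ k))"
    by (simp only: sum.distrib)
  finally have "x \<bullet> (hybrid_laplacian El Eq wl wq *v x) = \<dots>" .
  then show ?thesis
    using sum_symmetric_complete_square[where a = "\<lambda>i k. wadj El wl $ i $ k" and c = "- 1"
        and S = UNIV and x = "\<lambda>i. x $ i"]
      sum_symmetric_complete_square[where a = "\<lambda>i k. wadj Eq wq $ i $ k" and c = 1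
        and S = UNIV and x = "\<lambda>i. x $ i"]
    by (simp add: wadj_commute distrib_left)
qed

lemma double_sum_nonneg_eq_0_iff:
  fixes f :: "'a \<Rightarrow> 'b \<Rightarrow> real"
  assumes "finite S" "finite T" "\<And>i k. 0 \<le> f i k"
  shows "(\<Sum>i\<in>S. \<Sum>k\<in>T. f i k) = 0 \<longleftrightarrow> (\<forall>i\<in>S. \<forall>k\<in>T. f i k = 0)"
  using assms by (simp add: sum_nonneg_eq_0_iff sum_nonneg)

lemma mat_kernel_hybrid_laplacian:
  fixes El Eq :: "'n::finite set set"
  assumes pos_l: "\<forall>e\<in>El. wl e > 0" and pos_q: "\<forall>e\<in>Eq. wq e > 0"
  shows "mat_kernel (hybrid_laplacian El Eq wl wq) =
    {x. \<forall>i k. ({i, k} \<in> El \<longrightarrow> x $ i = x $ k) \<and> ({i, k} \<in> Eq \<longrightarrow> x $ i = - x $ k)}"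
proof (intro set_eqI iffI CollectI allI conjI impI)
  fix x :: "real^'n" and i k
  let ?P = "\<Sum>i\<in>UNIV. \<Sum>k\<in>UNIV. wadj El wl $ i $ k * (x $ i - x $ k)\<^sup>2"
  let ?Q = "\<Sum>i\<in>UNIV. \<Sum>k\<in>UNIV. wadj Eq wq $ i $ k * (x $ i + x $ k)\<^sup>2"
  assume "x \<in> mat_kernel (hybrid_laplacian El Eq wl wq)"
  then have "?P + ?Q = 0"
    using hybrid_laplacian_quadratic_form[of x El Eq wl wq] by (simp add: mat_kernel_def)
  moreover have "?P \<ge> 0" "?Q \<ge> 0"
    using wadj_nonneg[OF pos_l] wadj_nonneg[OF pos_q] by (simp_all add: sum_nonneg)
  ultimately have "?P = 0" "?Q = 0" by linarith+
  then have l: "wadj El wl $ i $ k * (x $ i - x $ k)\<^sup>2 = 0"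
    and q: "wadj Eq wq $ i $ k * (x $ i + x $ k)\<^sup>2 = 0"
    using wadj_nonneg[OF pos_l] wadj_nonneg[OF pos_q]
    by (simp_all add: double_sum_nonneg_eq_0_iff)
  show "x $ i = x $ k" if "{i, k} \<in> El"
    using l wadj_pos[OF pos_l that] by simp
  show "x $ i = - x $ k" if "{i, k} \<in> Eq"
    using q wadj_pos[OF pos_q that] by (simp add: add_eq_0_iff)
next
  fix x :: "real^'n"
  assume "x \<in> {x. \<forall>i k. ({i, k} \<in> El \<longrightarrow> x $ i = x $ k) \<and> ({i, k} \<in> Eq \<longrightarrow> x $ i = - x $ k)}"
  then have row_terms_vanish: "\<And>i k. wadj El wl $ i $ k * (x $ i - x $ k) = 0"
    "\<And>i k. wadj Eq wq $ i $ k * (x $ i + x $ k) = 0"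
    unfolding wadj_def by auto
  show "x \<in> mat_kernel (hybrid_laplacian El Eq wl wq)"
    by (simp add: mat_kernel_def vec_eq_iff hybrid_laplacian_mult_vec_nth row_terms_vanish
        del: mult_eq_0_iff)
qed

theorem lemma2:
  fixes E_L E_Q :: "'n::finite set set"
    and wl1 wq1 wl2 wq2 :: "'n set \<Rightarrow> real"
  assumes "weighted_hybrid_graph E_L E_Q wl1 wq1"
    and "weighted_hybrid_graph E_L E_Q wl2 wq2"
  shows "mat_kernel (hybrid_laplacian E_L E_Q wl1 wq1) = mat_kernel (hybrid_laplacian E_L E_Q wl2 wq2)"
  using assms by (simp add: weighted_hybrid_graph_def mat_kernel_hybrid_laplacian)

end
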